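(* Let $n\ge 2$, let $\gamma: I\to S^n$ be a spherical unit speed curve, let $P\in S^n$ and let $s_0\in I$. Then: (1) If $P\neq \pm\mathbf{u}_n(s_0)$, then the spherical pedal curve-germ $ped_{\gamma,P}:(I,s_0)\to S^n$ is well-defined and the spherical orthotomic curve-germ $ort_{\gamma,P}:(I,s_0)\to S^n$ is $\mathcal{L}$-equivalent to it. (If $P=\pm\mathbf{u}_n(s_0)$, the germ $ped_{\gamma,P}$ at $s_0$ is not defined.) (2) If $P=\pm\mathbf{u}_n(s_0)$, then $ort_{\gamma,P}:(I,s_0)\to S^n$ is $\mathcal{L}$-equivalent to the spherical dual curve-germ $\mathbf{u}_n:(I,s_0)\to S^n$.
   Context: $I\subset\mathbb{R}$ is an open interval and $S^n$ the unit sphere in $\mathbb{R}^{n+1}$; the dot denotes the Euclidean inner product. A regular curve $\gamma:I\to S^n$ is a spherical unit speed curve if, setting $\mathbf{u}_{-1}\equiv\mathbf{0}$, $\mathbf{u}_0=\gamma$, $\|\mathbf{u}_0'\|\equiv 1$, $\kappa_0\equiv 0$, the maps $\mathbf{u}_i(s)=\dfrac{\mathbf{u}_{i-1}'(s)+\kappa_{i-1}(s)\mathbf{u}_{i-2}(s)}{\|\mathbf{u}_{i-1}'(s)+\kappa_{i-1}(s)\mathbf{u}_{i-2}(s)\|}$ with $\kappa_i(s)=\|\mathbf{u}_{i-1}'(s)+\kappa_{i-1}(s)\mathbf{u}_{i-2}(s)\|>0$ are well-defined for $1\le i\le n-1$ and all $s\in I$. Then $\mathbf{u}_0(s),\dots,\mathbf{u}_{n-1}(s)$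 are orthonormal, and the spherical dual curve $\mathbf{u}_n:I\to S^n$ is defined by requiring $\mathbf{u}_0(s),\dots,\mathbf{u}_n(s)$ orthonormal with $\det(\mathbf{u}_0(s),\dots,\mathbf{u}_n(s))=1$; also $\kappa_n(s)=\mathbf{u}_{n-1}'(s)\cdot\mathbf{u}_n(s)$. For $P\in S^n$ with $P\cdot\mathbf{u}_n(s)\neq\pm1$, the spherical pedal curve is $ped_{\gamma,P}(s)=\dfrac{P-(P\cdot\mathbf{u}_n(s))\mathbf{u}_n(s)}{\sqrt{1-(P\cdot\mathbf{u}_n(s))^2}}$ (equivalently the normalization of $\sum_{i=0}^{n-1}(P\cdot\mathbf{u}_i(s))\mathbf{u}_i(s)$). For any $P\in S^n$ the spherical orthotomic curve is $ort_{\gamma,P}(s)=\sum_{i=0}^{n-1}(P\cdot\mathbf{u}_i(s))\mathbf{u}_i(s)-(P\cdot\mathbf{u}_n(s))\mathbf{u}_n(s)=P-2(P\cdot\mathbf{u}_n(s))\mathbf{u}_n(s)$. Two curve-germs $f,g:(I,s_0)\to S^n$ are $\mathcal{L}$-equivalent if there is a germ of $C^\infty$ diffeomorphism $\psi:(S^n,f(s_0))\to(S^n,g(s_0))$ with $g=\psi\circ f$ as germs. *)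

theory Defs
  imports "HOL-Analysis.Analysis"
begin

fun Ck_on :: "nat \<Rightarrow> 'a::real_normed_vector set \<Rightarrow> ('a \<Rightarrow> 'b::real_normed_vector) \<Rightarrow> bool" where
  "Ck_on 0 U f = continuous_on U f"
| "Ck_on (Suc k) U f =
     (f differentiable_on U \<and> (\<forall>v. Ck_on k U (\<lambda>x. frechet_derivative f (at x) v)))"

definition smooth_on :: "'a::real_normed_vector set \<Rightarrow> ('a \<Rightarrow> 'b::real_normed_vector) \<Rightarrow> bool" where
  "smooth_on U f \<longleftrightarrow> (\<forall>k. Ck_on k U f)"

(* Recursive Frenet-type construction.  frame_aux \<gamma> i = (u_{i-1}, u_i, \<kappa>_i) *)
fun frame_aux :: "(real \<Rightarrow> real^'n) \<Rightarrow> nat \<Rightarrow>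
    (real \<Rightarrow> real^'n) \<times> (real \<Rightarrow> real^'n) \<times> (real \<Rightarrow> real)" where
  "frame_aux \<gamma> 0 = ((\<lambda>s. 0), \<gamma>, (\<lambda>s. 0))"
| "frame_aux \<gamma> (Suc i) =
     (let (a, b, k) = frame_aux \<gamma> i;
          w = (\<lambda>s. vector_derivative b (at s) + k s *\<^sub>R a s)
      in (b, (\<lambda>s. (1 / norm (w s)) *\<^sub>R w s), (\<lambda>s. norm (w s))))"

definition frame_u :: "(real \<Rightarrow> real^'n) \<Rightarrow> nat \<Rightarrow> real \<Rightarrow> real^'n" where
  "frame_u \<gamma> i = fst (snd (frame_aux \<gamma> i))"

definition frame_kappa :: "(real \<Rightarrow> real^'n) \<Rightarrow> nat \<Rightarrow> real \<Rightarrow> real" where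
  "frame_kappa \<gamma> i = snd (snd (frame_aux \<gamma> i))"

(* Determinant of the (n+1)x(n+1) matrix whose k-th column is v k, coordinates of
   R^{n+1} being listed in the order e 0, ..., e n  (e : {0..n} -> 'n a bijection) *)
definition frame_det :: "(nat \<Rightarrow> 'n::finite) \<Rightarrow> (nat \<Rightarrow> real^'n) \<Rightarrow> real" where
  "frame_det e v = det (\<chi> i j. v (inv_into {0..<CARD('n)} e j) $ i)"

definition spherical_unit_speed_curve ::
    "nat \<Rightarrow> real set \<Rightarrow> (real \<Rightarrow> real^'n::finite) \<Rightarrow> bool" where
  "spherical_unit_speed_curve n I \<gamma> \<longleftrightarrow>
     smooth_on I \<gamma> \<and>
     (\<forall>s\<in>I. norm (\<gamma> s) = 1 \<and> norm (vector_derivative \<gamma> (at s)) = 1) \<and>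
     (\<forall>i\<in>{1..n-1}. \<forall>s\<in>I. frame_kappa \<gamma> i s > 0)"

definition dual_curve :: "(nat \<Rightarrow> 'n::finite) \<Rightarrow> nat \<Rightarrow> (real \<Rightarrow> real^'n) \<Rightarrow> real \<Rightarrow> real^'n" where
  "dual_curve e n \<gamma> s =
     (THE v. norm v = 1 \<and> (\<forall>i<n. frame_u \<gamma> i s \<bullet> v = 0) \<and>
             frame_det e (\<lambda>k. if k = n then v else frame_u \<gamma> k s) = 1)"

definition pedal :: "(nat \<Rightarrow> 'n::finite) \<Rightarrow> nat \<Rightarrow> (real \<Rightarrow> real^'n) \<Rightarrow> real^'n \<Rightarrow> real \<Rightarrow> real^'n" where
  "pedal e n \<gamma> P s =
     (let un = dual_curve e n \<gamma> s
      in (1 / sqrt (1 - (P \<bullet> un)\<^sup>2)) *\<^sub>R (P - (P \<bullet> un) *\<^sub>R un))"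

definition orthotomic :: "(nat \<Rightarrow> 'n::finite) \<Rightarrow> nat \<Rightarrow> (real \<Rightarrow> real^'n) \<Rightarrow> real^'n \<Rightarrow> real \<Rightarrow> real^'n" where
  "orthotomic e n \<gamma> P s =
     (let un = dual_curve e n \<gamma> s in P - (2 * (P \<bullet> un)) *\<^sub>R un)"

(* A germ of C^\<infinity> diffeomorphism (S^n, p) -> (S^n, q): restriction to the sphere of
   ambient smooth maps, with a smooth inverse germ on the sphere. *)
definition sphere_diffeo_germ :: "(real^'n::finite \<Rightarrow> real^'n) \<Rightarrow> real^'n \<Rightarrow> real^'n \<Rightarrow> bool" where
  "sphere_diffeo_germ \<psi> p q \<longleftrightarrow>
     (\<exists>U V \<phi>. open U \<and> open V \<and> p \<in> U \<and> q \<in> V \<and>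
        smooth_on U \<psi> \<and> smooth_on V \<phi> \<and>
        \<psi> p = q \<and> \<phi> q = p \<and>
        \<psi> ` (U \<inter> sphere 0 1) \<subseteq> V \<inter> sphere 0 1 \<and>
        \<phi> ` (V \<inter> sphere 0 1) \<subseteq> U \<inter> sphere 0 1 \<and>
        (\<forall>x\<in>U \<inter> sphere 0 1. \<phi> (\<psi> x) = x) \<and>
        (\<forall>y\<in>V \<inter> sphere 0 1. \<psi> (\<phi> y) = y))"

definition L_equivalent_germs :: "(real \<Rightarrow> real^'n::finite) \<Rightarrow> (real \<Rightarrow> real^'n) \<Rightarrow> real \<Rightarrow> bool" where
  "L_equivalent_germs f g s0 \<longleftrightarrow>
     (\<exists>\<psi>. sphere_diffeo_germ \<psi> (f s0) (g s0) \<and>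
          (\<exists>\<epsilon>>0. \<forall>s\<in>ball s0 \<epsilon>. g s = \<psi> (f s)))"

end

theory Submission
  imports Defs
begin

text \<open>
  The orthotomic point \<open>ort(s) = P - 2 (P \<bullet> u\<^sub>n(s)) u\<^sub>n(s)\<close> is the mirror image of \<open>P\<close> in the
  great sphere orthogonal to \<open>u\<^sub>n(s)\<close>. For a unit vector \<open>Q\<close> and \<open>\<sigma> = \<plusminus>1\<close>, the map
  \<open>x \<mapsto> \<sigma> (Q + x) / \<parallel>Q + x\<parallel>\<close> is a diffeomorphism from the open hemisphere \<open>Q \<bullet> x > -1\<close>
  of the sphere onto the hemisphere \<open>\<sigma> (Q \<bullet> y) > 0\<close>, with inverse \<open>y \<mapsto> 2 (Q \<bullet> y) y - Q\<close>.
  With \<open>Q = P\<close>, \<open>\<sigma> = 1\<close> it sends \<open>ort(s)\<close> to \<open>ped(s)\<close>; this works near \<open>s\<^sub>0\<close> as long as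
  \<open>ort(s\<^sub>0) \<noteq> -P\<close>, i.e. \<open>P \<noteq> \<plusminus>u\<^sub>n(s\<^sub>0)\<close>. With \<open>Q = -P\<close> and \<open>\<sigma>\<close> the opposite of the sign of
  \<open>P \<bullet> u\<^sub>n\<close> it sends \<open>ort(s)\<close> to \<open>u\<^sub>n(s)\<close> wherever that sign is unchanged, which covers
  \<open>P = \<plusminus>u\<^sub>n(s\<^sub>0)\<close>, where \<open>ort(s\<^sub>0) = -P\<close>. Everything is local because \<open>u\<^sub>n\<close> is continuous,
  which follows from smoothness and orthonormality of the Frenet frame \<open>u\<^sub>0, \<dots>, u\<^sub>n\<^sub>-\<^sub>1\<close>.
\<close>

section \<open>Smooth maps\<close>

lemma Ck_on_cong:
  assumes "open U" "\<And>x. x \<in> U \<Longrightarrow> f x = g x" "Ck_on k U f"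
  shows "Ck_on k U g"
  using assms(2,3)
proof (induction k arbitrary: f g)
  case 0
  then show ?case using continuous_on_cong by (metis Ck_on.simps(1))
next
  case (Suc k)
  have f_diff: "f differentiable at x" if "x \<in> U" for x
    using Suc.prems(2) that \<open>open U\<close> by (simp add: differentiable_on_eq_differentiable_at)
  have "g differentiable at x" if x: "x \<in> U" for x
  proof -
    obtain f' where "(f has_derivative f') (at x)"
      using f_diff[OF x] by (auto simp: differentiable_def)
    then have "(g has_derivative f') (at x)"
      by (rule has_derivative_transform_within_open[OF _ \<open>open U\<close> x]) (use Suc.prems(1) in auto)
    then show ?thesis by (auto simp: differentiable_def)
  qed
  then have "g differentiable_on U"
    using \<open>open U\<close> by (simp add: differentiable_on_eq_differentiable_at)
  moreover have "Ck_on k U (\<lambda>x. frechet_derivative g (at x) v)" for v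
  proof (rule Suc.IH)
    show "Ck_on k U (\<lambda>x. frechet_derivative f (at x) v)" using Suc.prems by simp
    show "frechet_derivative f (at x) v = frechet_derivative g (at x) v" if "x \<in> U" for x
      using frechet_derivative_transform_within_open[OF f_diff[OF that] \<open>open U\<close> that] Suc.prems(1)
      by simp
  qed
  ultimately show ?case by simp
qed

lemma Ck_on_Suc_imp_Ck_on: "Ck_on (Suc k) U f \<Longrightarrow> Ck_on k U f"
  by (induction k arbitrary: f) (simp_all add: differentiable_imp_continuous_on)

lemma Ck_on_SucI:
  assumes "open U" "\<And>x. x \<in> U \<Longrightarrow> (f has_derivative f' x) (at x)"
    and "\<And>v. Ck_on k U (\<lambda>x. f' x v)"
  shows "Ck_on (Suc k) U f"
proof -
  have "f differentiable_on U"
    using assms(2) by (meson differentiableI differentiable_at_imp_differentiable_on)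
  moreover have "Ck_on k U (\<lambda>x. frechet_derivative f (at x) v)" for v
    by (rule Ck_on_cong[OF assms(1) _ assms(3)[of v]]) (use assms(2) frechet_derivative_at in metis)
  ultimately show ?thesis by simp
qed

lemma Ck_on_Suc_has_derivative:
  assumes "open U" "Ck_on (Suc k) U f" "x \<in> U"
  shows "(f has_derivative frechet_derivative f (at x)) (at x)"
  using assms
  by (metis Ck_on.simps(2) differentiable_on_eq_differentiable_at frechet_derivative_works)

lemma Ck_on_const: "open U \<Longrightarrow> Ck_on k U (\<lambda>x. c)"
  by (induction k arbitrary: c) (auto intro!: Ck_on_SucI[where f'="\<lambda>x v. 0"])

lemma Ck_on_ident: "open U \<Longrightarrow> Ck_on k U (\<lambda>x. x)"
  by (cases k) (auto intro!: Ck_on_SucI[where f'="\<lambda>x v. v"] Ck_on_const)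

lemma Ck_on_add:
  assumes "open U" "Ck_on k U f" "Ck_on k U g"
  shows "Ck_on k U (\<lambda>x. f x + g x)"
  using assms(2,3)
proof (induction k arbitrary: f g)
  case 0
  then show ?case by (simp add: continuous_on_add)
next
  case (Suc k)
  show ?case
  proof (rule Ck_on_SucI[OF \<open>open U\<close>])
    show "((\<lambda>x. f x + g x) has_derivative
        (\<lambda>v. frechet_derivative f (at x) v + frechet_derivative g (at x) v)) (at x)"
      if "x \<in> U" for x
      using Suc.prems by (intro has_derivative_add Ck_on_Suc_has_derivative[OF \<open>open U\<close> _ that])
    show "Ck_on k U (\<lambda>x. frechet_derivative f (at x) v + frechet_derivative g (at x) v)" for v
      using Suc by simp
  qed
qed

lemma Ck_on_bilinear:
  assumes "bounded_bilinear mul" "open U" "Ck_on k U f" "Ck_on k U g"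
  shows "Ck_on k U (\<lambda>x. mul (f x) (g x))"
  using assms(3,4)
proof (induction k arbitrary: f g)
  case 0
  then show ?case by (simp add: bounded_bilinear.continuous_on[OF assms(1)])
next
  case (Suc k)
  show ?case
  proof (rule Ck_on_SucI[OF \<open>open U\<close>])
    show "((\<lambda>x. mul (f x) (g x)) has_derivative
        (\<lambda>v. mul (f x) (frechet_derivative g (at x) v) + mul (frechet_derivative f (at x) v) (g x))) (at x)"
      if "x \<in> U" for x
      using Suc.prems
      by (intro bounded_bilinear.FDERIV[OF assms(1)] Ck_on_Suc_has_derivative[OF \<open>open U\<close> _ that])
    show "Ck_on k U (\<lambda>x. mul (f x) (frechet_derivative g (at x) v) + mul (frechet_derivative f (at x) v) (g x))"
      for v
      using Suc by (simp add: Ck_on_add[OF \<open>open U\<close>] Ck_on_Suc_imp_Ck_on)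
  qed
qed

lemma Ck_on_scaleR: "open U \<Longrightarrow> Ck_on k U f \<Longrightarrow> Ck_on k U g \<Longrightarrow> Ck_on k U (\<lambda>x. f x *\<^sub>R g x)"
  by (rule Ck_on_bilinear[OF bounded_bilinear_scaleR])

lemma Ck_on_mult:
  "open U \<Longrightarrow> Ck_on k U f \<Longrightarrow> Ck_on k U g \<Longrightarrow> Ck_on k U (\<lambda>x. f x * g x :: real)"
  by (rule Ck_on_bilinear[OF bounded_bilinear_mult])

lemma Ck_on_inner: "open U \<Longrightarrow> Ck_on k U f \<Longrightarrow> Ck_on k U g \<Longrightarrow> Ck_on k U (\<lambda>x. f x \<bullet> g x)"
  by (rule Ck_on_bilinear[OF bounded_bilinear_inner])

lemma Ck_on_minus: "open U \<Longrightarrow> Ck_on k U f \<Longrightarrow> Ck_on k U (\<lambda>x. - f x)"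
  using Ck_on_scaleR[of U k "\<lambda>x. -1" f] Ck_on_const[of U k "-1"] by simp

lemma Ck_on_diff: "open U \<Longrightarrow> Ck_on k U f \<Longrightarrow> Ck_on k U g \<Longrightarrow> Ck_on k U (\<lambda>x. f x - g x)"
  using Ck_on_add[OF _ _ Ck_on_minus, of U k f g] by simp

lemma Ck_on_inverse:
  assumes "open U" "Ck_on k U h" "\<And>x. x \<in> U \<Longrightarrow> h x \<noteq> (0::real)"
  shows "Ck_on k U (\<lambda>x. inverse (h x))"
  using assms(2,3)
proof (induction k arbitrary: h)
  case 0
  then show ?case by (simp add: continuous_on_inverse)
next
  case (Suc k)
  have IH: "Ck_on k U (\<lambda>x. inverse (h x))"
    using Suc Ck_on_Suc_imp_Ck_on by metis
  show ?case
  proof (rule Ck_on_SucI[OF \<open>open U\<close>])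
    show "((\<lambda>x. inverse (h x)) has_derivative
        (\<lambda>v. - (inverse (h x) * frechet_derivative h (at x) v * inverse (h x)))) (at x)"
      if "x \<in> U" for x
      using Deriv.has_derivative_inverse[OF Suc.prems(2)[OF that] Ck_on_Suc_has_derivative[OF \<open>open U\<close> Suc.prems(1) that]] .
    show "Ck_on k U (\<lambda>x. - (inverse (h x) * frechet_derivative h (at x) v * inverse (h x)))" for v
      using Suc.prems(1) by (intro Ck_on_minus Ck_on_mult IH \<open>open U\<close>) simp
  qed
qed

lemma Ck_on_sqrt:
  assumes "open U" "Ck_on k U h" "\<And>x. x \<in> U \<Longrightarrow> h x > 0"
  shows "Ck_on k U (\<lambda>x. sqrt (h x))"
  using assms(2,3)
proof (induction k arbitrary: h)
  case 0
  then show ?case by (simp add: continuous_on_real_sqrt)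
next
  case (Suc k)
  have IH: "Ck_on k U (\<lambda>x. sqrt (h x))"
    using Suc Ck_on_Suc_imp_Ck_on by metis
  show ?case
  proof (rule Ck_on_SucI[OF \<open>open U\<close>])
    show "((\<lambda>x. sqrt (h x)) has_derivative
        (\<lambda>v. frechet_derivative h (at x) v * (inverse (sqrt (h x)) / 2))) (at x)"
      if "x \<in> U" for x
      using Suc.prems that
      by (intro has_derivative_real_sqrt Ck_on_Suc_has_derivative[OF \<open>open U\<close>]) auto
    have "Ck_on k U (\<lambda>x. inverse (sqrt (h x)) * (1 / 2))"
      using Suc.prems(2) by (intro Ck_on_mult Ck_on_inverse IH Ck_on_const \<open>open U\<close>) force
    then have "Ck_on k U (\<lambda>x. inverse (sqrt (h x)) / 2)"
      by simp
    then show "Ck_on k U (\<lambda>x. frechet_derivative h (at x) v * (inverse (sqrt (h x)) / 2))" for v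
      by (rule Ck_on_mult[OF \<open>open U\<close>, rotated]) (use Suc.prems(1) in simp)
  qed
qed

lemma smooth_on_Ck_on: "smooth_on U f \<Longrightarrow> Ck_on k U f"
  by (simp add: smooth_on_def)

lemma smooth_on_imp_continuous_on: "smooth_on U f \<Longrightarrow> continuous_on U f"
  using smooth_on_Ck_on[of U f 0] by simp

lemma smooth_on_const: "open U \<Longrightarrow> smooth_on U (\<lambda>x. c)"
  by (simp add: smooth_on_def Ck_on_const)

lemma smooth_on_ident: "open U \<Longrightarrow> smooth_on U (\<lambda>x. x)"
  by (simp add: smooth_on_def Ck_on_ident)

lemma smooth_on_add:
  "open U \<Longrightarrow> smooth_on U f \<Longrightarrow> smooth_on U g \<Longrightarrow> smooth_on U (\<lambda>x. f x + g x)"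
  by (simp add: smooth_on_def Ck_on_add)

lemma smooth_on_diff:
  "open U \<Longrightarrow> smooth_on U f \<Longrightarrow> smooth_on U g \<Longrightarrow> smooth_on U (\<lambda>x. f x - g x)"
  by (simp add: smooth_on_def Ck_on_diff)

lemma smooth_on_scaleR:
  "open U \<Longrightarrow> smooth_on U f \<Longrightarrow> smooth_on U g \<Longrightarrow> smooth_on U (\<lambda>x. f x *\<^sub>R g x)"
  by (simp add: smooth_on_def Ck_on_scaleR)

lemma smooth_on_mult:
  "open U \<Longrightarrow> smooth_on U f \<Longrightarrow> smooth_on U g \<Longrightarrow> smooth_on U (\<lambda>x. f x * g x :: real)"
  by (simp add: smooth_on_def Ck_on_mult)

lemma smooth_on_inner:
  "open U \<Longrightarrow> smooth_on U f \<Longrightarrow> smooth_on U g \<Longrightarrow> smooth_on U (\<lambda>x. f x \<bullet> g x)"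
  by (simp add: smooth_on_def Ck_on_inner)

lemma smooth_on_divide:
  assumes "open U" "smooth_on U f" "smooth_on U g" "\<And>x. x \<in> U \<Longrightarrow> g x \<noteq> 0"
  shows "smooth_on U (\<lambda>x. f x / g x :: real)"
  using assms by (simp add: smooth_on_def divide_inverse Ck_on_mult Ck_on_inverse)

lemma smooth_on_norm:
  fixes f :: "'a::real_normed_vector \<Rightarrow> 'b::real_inner"
  assumes "open U" "smooth_on U f" "\<And>x. x \<in> U \<Longrightarrow> f x \<noteq> 0"
  shows "smooth_on U (\<lambda>x. norm (f x))"
proof -
  have "smooth_on U (\<lambda>x. sqrt (f x \<bullet> f x))"
    using assms by (simp add: smooth_on_def Ck_on_sqrt Ck_on_inner)
  then show ?thesis
    by (simp add: norm_eq_sqrt_inner)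
qed

lemma smooth_on_has_vector_derivative:
  fixes f :: "real \<Rightarrow> 'a::real_normed_vector"
  assumes "open U" "smooth_on U f" "s \<in> U"
  shows "(f has_vector_derivative vector_derivative f (at s)) (at s)"
  using Ck_on_Suc_has_derivative[OF assms(1) smooth_on_Ck_on[OF assms(2)] assms(3)]
  by (metis differentiableI vector_derivative_works)

lemma smooth_on_vector_derivative:
  fixes f :: "real \<Rightarrow> 'a::real_normed_vector"
  assumes "open U" "smooth_on U f"
  shows "smooth_on U (\<lambda>s. vector_derivative f (at s))"
  unfolding smooth_on_def
proof
  fix k
  have "Ck_on k U (\<lambda>s. frechet_derivative f (at s) 1)"
    using smooth_on_Ck_on[OF assms(2), of "Suc k"] by simp
  then show "Ck_on k U (\<lambda>s. vector_derivative f (at s))"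
  proof (rule Ck_on_cong[OF assms(1), rotated])
    fix s assume "s \<in> U"
    then have "f differentiable at s"
      using Ck_on_Suc_has_derivative[OF assms(1) smooth_on_Ck_on[OF assms(2)]] differentiableI by blast
    then show "frechet_derivative f (at s) 1 = vector_derivative f (at s)"
      by (simp add: frechet_derivative_eq_vector_derivative)
  qed
qed

section \<open>The Frenet frame\<close>

lemma has_vector_derivative_inner_const:
  fixes f g :: "real \<Rightarrow> 'a::real_inner"
  assumes "open I" "s \<in> I"
    and "(f has_vector_derivative f') (at s)" "(g has_vector_derivative g') (at s)"
    and "\<And>t. t \<in> I \<Longrightarrow> f t \<bullet> g t = c"
  shows "f' \<bullet> g s + f s \<bullet> g' = 0"
proof -
  have "((\<lambda>t. f t \<bullet> g t) has_derivative (\<lambda>h. f s \<bullet> (h *\<^sub>R g') + (h *\<^sub>R f') \<bullet> g s)) (at s)"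
    using assms(3,4) unfolding has_vector_derivative_def by (rule has_derivative_inner)
  moreover have "(\<lambda>h. f s \<bullet> (h *\<^sub>R g') + (h *\<^sub>R f') \<bullet> g s) = (*) (f' \<bullet> g s + f s \<bullet> g')"
    by (rule ext) (simp add: algebra_simps)
  ultimately have "((\<lambda>t. f t \<bullet> g t) has_field_derivative (f' \<bullet> g s + f s \<bullet> g')) (at s)"
    by (simp add: has_field_derivative_def)
  moreover have "((\<lambda>t. f t \<bullet> g t) has_field_derivative 0) (at s)"
    by (rule has_field_derivative_transform_within_open[OF DERIV_const[of c] assms(1,2)])
       (simp add: assms(5))
  ultimately show ?thesis
    by (rule DERIV_unique)
qed

definition frame_w :: "(real \<Rightarrow> real^'n::finite) \<Rightarrow> nat \<Rightarrow> real \<Rightarrow> real^'n" where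
  "frame_w \<gamma> i s =
     vector_derivative (frame_u \<gamma> i) (at s) + frame_kappa \<gamma> i s *\<^sub>R fst (frame_aux \<gamma> i) s"

lemma frame_aux_Suc_eq:
  "frame_aux \<gamma> (Suc i) =
     (frame_u \<gamma> i, \<lambda>s. (1 / norm (frame_w \<gamma> i s)) *\<^sub>R frame_w \<gamma> i s, \<lambda>s. norm (frame_w \<gamma> i s))"
  by (simp add: frame_u_def frame_kappa_def frame_w_def split_beta Let_def)

declare frame_aux.simps(2)[simp del]

lemma fst_frame_aux_Suc: "fst (frame_aux \<gamma> (Suc i)) = frame_u \<gamma> i"
  by (simp add: frame_aux_Suc_eq)

lemma frame_u_0: "frame_u \<gamma> 0 = \<gamma>"
  by (simp add: frame_u_def)

lemma frame_u_Suc: "frame_u \<gamma> (Suc i) s = (1 / norm (frame_w \<gamma> i s)) *\<^sub>R frame_w \<gamma> i s"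
  by (simp add: frame_u_def frame_aux_Suc_eq)

lemma frame_kappa_Suc: "frame_kappa \<gamma> (Suc i) s = norm (frame_w \<gamma> i s)"
  by (simp add: frame_kappa_def frame_aux_Suc_eq)

locale spherical_frame =
  fixes \<gamma> :: "real \<Rightarrow> real^'n::finite" and I :: "real set" and n :: nat
  assumes open_I: "open I"
    and smooth_\<gamma>: "smooth_on I \<gamma>"
    and norm_\<gamma>: "\<And>s. s \<in> I \<Longrightarrow> norm (\<gamma> s) = 1"
    and kappa_pos: "\<And>i s. 1 \<le> i \<Longrightarrow> i < n \<Longrightarrow> s \<in> I \<Longrightarrow> frame_kappa \<gamma> i s > 0"
    and n_pos: "n \<ge> 1"
begin

lemma frame_w_nonzero: "Suc m < n \<Longrightarrow> s \<in> I \<Longrightarrow> frame_w \<gamma> m s \<noteq> 0"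
  using kappa_pos[of "Suc m" s] by (auto simp: frame_kappa_Suc)

lemma smooth_on_frame:
  "m < n \<Longrightarrow> smooth_on I (frame_u \<gamma> m) \<and> smooth_on I (frame_kappa \<gamma> m) \<and> smooth_on I (fst (frame_aux \<gamma> m))"
proof (induction m)
  case 0
  then show ?case
    using smooth_\<gamma> by (simp add: frame_u_0 frame_kappa_def smooth_on_const open_I)
next
  case (Suc m)
  then have IH: "smooth_on I (frame_u \<gamma> m)" "smooth_on I (frame_kappa \<gamma> m)" "smooth_on I (fst (frame_aux \<gamma> m))"
    by auto
  have w: "smooth_on I (frame_w \<gamma> m)"
    unfolding frame_w_def[abs_def]
    by (intro smooth_on_add smooth_on_scaleR smooth_on_vector_derivative open_I IH)
  have norm_w: "smooth_on I (\<lambda>s. norm (frame_w \<gamma> m s))"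
    using frame_w_nonzero Suc.prems by (intro smooth_on_norm open_I w)
  have "smooth_on I (\<lambda>s. (1 / norm (frame_w \<gamma> m s)) *\<^sub>R frame_w \<gamma> m s)"
    using frame_w_nonzero Suc.prems
    by (intro smooth_on_scaleR smooth_on_divide smooth_on_const open_I norm_w w) simp
  then show ?case
    using norm_w IH by (simp add: frame_u_Suc[abs_def] frame_kappa_Suc[abs_def] fst_frame_aux_Suc)
qed

lemma smooth_on_frame_u: "m < n \<Longrightarrow> smooth_on I (frame_u \<gamma> m)"
  using smooth_on_frame by blast

lemma frame_u_has_vector_derivative:
  "m < n \<Longrightarrow> s \<in> I \<Longrightarrow>
    (frame_u \<gamma> m has_vector_derivative vector_derivative (frame_u \<gamma> m) (at s)) (at s)"
  using smooth_on_has_vector_derivative[OF open_I smooth_on_frame_u] by blast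

lemma frame_u_derivative:
  assumes "Suc j < n" "s \<in> I"
  shows "vector_derivative (frame_u \<gamma> j) (at s) =
     frame_kappa \<gamma> (Suc j) s *\<^sub>R frame_u \<gamma> (Suc j) s - frame_kappa \<gamma> j s *\<^sub>R fst (frame_aux \<gamma> j) s"
  using frame_w_nonzero[OF assms] by (simp add: frame_kappa_Suc frame_u_Suc frame_w_def)

lemma norm_frame_u: "m < n \<Longrightarrow> s \<in> I \<Longrightarrow> norm (frame_u \<gamma> m s) = 1"
  using norm_\<gamma> frame_w_nonzero by (cases m) (auto simp: frame_u_0 frame_u_Suc)

lemma frame_w_orthogonal:
  assumes "Suc m < n" "s \<in> I" "j \<le> m"
    and ON: "\<And>s i j. s \<in> I \<Longrightarrow> i \<le> m \<Longrightarrow> j \<le> m \<Longrightarrow>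
               frame_u \<gamma> i s \<bullet> frame_u \<gamma> j s = (if i = j then 1 else 0)"
  shows "frame_w \<gamma> m s \<bullet> frame_u \<gamma> j s = 0"
proof -
  let ?u = "\<lambda>i. frame_u \<gamma> i s" and ?d = "\<lambda>i. vector_derivative (frame_u \<gamma> i) (at s)"
  let ?k = "\<lambda>i. frame_kappa \<gamma> i s" and ?p = "\<lambda>i. fst (frame_aux \<gamma> i) s"
  have d_skew: "?d i \<bullet> ?u j + ?u i \<bullet> ?d j = 0" if "i \<le> m" "j \<le> m" for i j
    using that assms(1,2) ON
    by (intro has_vector_derivative_inner_const[OF open_I \<open>s \<in> I\<close>, where c="if i = j then 1 else 0"]
        frame_u_has_vector_derivative) auto
  have p_u: "?p i \<bullet> ?u j = (if Suc j = i then 1 else 0)" if "i \<le> m" "j \<le> m" for i j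
    using that ON[OF \<open>s \<in> I\<close>] by (cases i) (auto simp: fst_frame_aux_Suc)
  show ?thesis
  proof (cases "j = m")
    case True
    have "?d m \<bullet> ?u m = 0"
      using d_skew[of m m] by (simp add: inner_commute)
    then show ?thesis
      using True p_u[of m m] by (simp add: frame_w_def inner_add_left)
  next
    case False
    then have "j < m" using assms(3) by simp
    have "?d m \<bullet> ?u j = - (?u m \<bullet> ?d j)"
      using d_skew[of m j] assms(3) by simp
    also have "\<dots> = - (?k (Suc j) * (if m = Suc j then 1 else 0))"
      using ON[OF \<open>s \<in> I\<close>, of m "Suc j"] p_u[of j m] \<open>j < m\<close> assms(1,2)
      by (simp add: frame_u_derivative inner_diff_right inner_commute)
    finally show ?thesis
      using p_u[of m j] assms(3) by (simp add: frame_w_def inner_add_left)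
  qed
qed

lemma frame_u_orthonormal:
  assumes "i < n" "j < n" "s \<in> I"
  shows "frame_u \<gamma> i s \<bullet> frame_u \<gamma> j s = (if i = j then 1 else 0)"
proof -
  have "\<forall>s\<in>I. \<forall>i\<le>m. \<forall>j\<le>m. frame_u \<gamma> i s \<bullet> frame_u \<gamma> j s = (if i = j then 1 else 0)"
    if "m < n" for m
    using that
  proof (induction m)
    case 0
    then show ?case using norm_frame_u by (simp add: norm_eq_1[symmetric])
  next
    case (Suc m)
    then have ON: "\<And>s i j. s \<in> I \<Longrightarrow> i \<le> m \<Longrightarrow> j \<le> m \<Longrightarrow>
        frame_u \<gamma> i s \<bullet> frame_u \<gamma> j s = (if i = j then 1 else 0)"
      by auto
    have new: "frame_u \<gamma> (Suc m) s \<bullet> frame_u \<gamma> j s = 0" if "s \<in> I" "j \<le> m" for s j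
      using frame_w_orthogonal[OF Suc.prems that ON] by (simp add: frame_u_Suc)
    show ?case
    proof (intro ballI allI impI)
      fix s i j assume s: "s \<in> I" and "i \<le> Suc m" "j \<le> Suc m"
      then consider "i \<le> m" "j \<le> m" | "i = Suc m" "j \<le> m" | "i \<le> m" "j = Suc m" | "i = Suc m" "j = Suc m"
        by linarith
      then show "frame_u \<gamma> i s \<bullet> frame_u \<gamma> j s = (if i = j then 1 else 0)"
      proof cases
        case 3
        then show ?thesis using new[OF s, of i] by (simp add: inner_commute)
      next
        case 4
        then show ?thesis using norm_frame_u[OF Suc.prems s] by (simp add: norm_eq_1[symmetric])
      qed (simp_all add: ON new s)
    qed
  qed
  from this[of "n - 1"] show ?thesis
    using assms n_pos by simp
qed

end

section \<open>Positively oriented unit normals\<close>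

definition extend_frame :: "nat \<Rightarrow> (nat \<Rightarrow> 'a) \<Rightarrow> 'a \<Rightarrow> nat \<Rightarrow> 'a" where
  "extend_frame n v w = (\<lambda>k. if k = n then w else v k)"

definition unit_normal :: "nat \<Rightarrow> (nat \<Rightarrow> 'a::real_inner) \<Rightarrow> 'a \<Rightarrow> bool" where
  "unit_normal n v w \<longleftrightarrow> norm w = 1 \<and> (\<forall>i<n. v i \<bullet> w = 0)"

lemma frame_det_eq_det_rows:
  "frame_det e v = det (\<chi> j. v (inv_into {0..<CARD('n)} e j) :: real^'n::finite^'n)"
proof -
  have "(\<chi> i j. v (inv_into {0..<CARD('n)} e j) $ i :: real^'n^'n) =
      transpose (\<chi> j. v (inv_into {0..<CARD('n)} e j))"
    by (simp add: transpose_def vec_eq_iff)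
  then show ?thesis
    by (simp add: frame_det_def)
qed

lemma inv_into_index_le:
  assumes "CARD('n::finite) = n + 1" "bij_betw e {0..n} (UNIV :: 'n set)"
  shows "inv_into {0..<CARD('n)} e j \<le> n"
  using bij_betw_inv_into[OF assms(2)] assms(1)
  by (auto simp: bij_betw_def atLeastLessThanSuc_atLeastAtMost)

lemma frame_det_cong:
  assumes "CARD('n::finite) = n + 1" "bij_betw e {0..n} (UNIV :: 'n set)"
    and "\<And>k. k \<le> n \<Longrightarrow> v k = v' k"
  shows "frame_det e v = frame_det e v'"
  unfolding frame_det_def using assms inv_into_index_le[OF assms(1,2)] by simp

lemma continuous_frame_det:
  assumes "CARD('n::finite) = n + 1" "bij_betw e {0..n} (UNIV :: 'n set)"
    and "\<And>k. k \<le> n \<Longrightarrow> continuous F (\<lambda>s. v s k)"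
  shows "continuous F (\<lambda>s. frame_det e (v s :: nat \<Rightarrow> real^'n))"
proof -
  have "continuous F (\<lambda>s. if k \<le> n then v s k else 0)" for k
    by (cases "k \<le> n") (simp_all add: assms(3))
  then have "continuous F (\<lambda>s. frame_det e (\<lambda>k. if k \<le> n then v s k else 0))"
    unfolding frame_det_def det_def vec_lambda_beta by (intro continuous_intros continuous_component)
  moreover have "frame_det e (\<lambda>k. if k \<le> n then v s k else 0) = frame_det e (v s)" for s
    by (rule frame_det_cong[OF assms(1,2)]) simp
  ultimately show ?thesis by simp
qed

locale orthonormal_family =
  fixes e :: "nat \<Rightarrow> 'n::finite" and n :: nat and v :: "nat \<Rightarrow> real^'n"
  assumes card: "CARD('n) = n + 1"
    and bij: "bij_betw e {0..n} (UNIV :: 'n set)"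
    and orthonormal: "\<And>i j. i < n \<Longrightarrow> j < n \<Longrightarrow> v i \<bullet> v j = (if i = j then 1 else 0)"
begin

definition index :: "'n \<Rightarrow> nat" where
  "index = inv_into {0..<CARD('n)} e"

lemma index_le: "index j \<le> n"
  unfolding index_def by (rule inv_into_index_le[OF card bij])

lemma index_eq_iff: "index a = index b \<longleftrightarrow> a = b"
  using bij_betw_inv_into[OF bij] card
  by (auto simp: index_def bij_betw_def inj_on_def atLeastLessThanSuc_atLeastAtMost)

lemma index_eq_n_iff: "index j = n \<longleftrightarrow> j = e n"
proof -
  have "index (e n) = n"
    using bij card by (simp add: index_def bij_betw_def inv_into_f_f atLeastLessThanSuc_atLeastAtMost)
  then show ?thesis using index_eq_iff by metis
qed

lemma extend_frame_orthonormal: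
  "unit_normal n v w \<Longrightarrow> k \<le> n \<Longrightarrow> l \<le> n \<Longrightarrow>
    extend_frame n v w k \<bullet> extend_frame n v w l = (if k = l then 1 else 0)"
  by (auto simp: extend_frame_def unit_normal_def orthonormal inner_commute norm_eq_1)

lemma frame_det_extend_frame_cases:
  assumes "unit_normal n v w"
  shows "frame_det e (extend_frame n v w) = 1 \<or> frame_det e (extend_frame n v w) = -1"
proof -
  let ?Q = "(\<chi> i j. extend_frame n v w (index j) $ i) :: real^'n^'n"
  have "transpose ?Q ** ?Q = mat 1"
    using extend_frame_orthonormal[OF assms index_le index_le]
    by (simp add: vec_eq_iff matrix_matrix_mult_def transpose_def mat_def inner_vec_def index_eq_iff)
  then have "orthogonal_matrix ?Q"
    by (simp add: orthogonal_matrix)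
  from det_orthogonal_matrix[OF this] show ?thesis
    by (simp add: frame_det_def index_def)
qed

lemma frame_det_extend_frame_uminus:
  "frame_det e (extend_frame n v (- w)) = - frame_det e (extend_frame n v w)"
proof -
  have "frame_det e (extend_frame n v (- w)) =
      det (\<chi> j. if j = e n then (-1) *s w else extend_frame n v w (index j))"
    unfolding frame_det_eq_det_rows index_def[symmetric]
    by (rule arg_cong[where f=det]) (auto simp: vec_eq_iff extend_frame_def index_eq_n_iff)
  also have "\<dots> = - det (\<chi> j. if j = e n then w else extend_frame n v w (index j))"
    using det_row_mul[of "e n" "-1" "\<lambda>j. w" "\<lambda>j. extend_frame n v w (index j)"] by simp
  also have "(\<chi> j. if j = e n then w else extend_frame n v w (index j)) = (\<chi> j. extend_frame n v w (index j))"
    by (auto simp: vec_eq_iff extend_frame_def index_eq_n_iff)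
  finally show ?thesis
    unfolding frame_det_eq_det_rows index_def .
qed

lemma unit_normal_unique:
  assumes w: "unit_normal n v w" and w': "unit_normal n v w'"
  shows "w' = w \<or> w' = - w"
proof -
  let ?B = "extend_frame n v w ` {0..n}"
  have "inj_on (extend_frame n v w) {0..n}"
    using extend_frame_orthonormal[OF w] by (intro inj_onI) (metis atLeastAtMost_iff one_neq_zero)
  then have "card ?B = n + 1"
    by (simp add: card_image)
  moreover have "independent ?B"
    using extend_frame_orthonormal[OF w]
    by (intro pairwise_orthogonal_independent) (force simp: pairwise_def orthogonal_def)+
  ultimately have "UNIV \<subseteq> span ?B"
    by (intro card_ge_dim_independent) (simp_all add: card)
  then have in_span: "w' - (w' \<bullet> w) *\<^sub>R w \<in> span ?B"
    by blast
  have "orthogonal (w' - (w' \<bullet> w) *\<^sub>R w) (extend_frame n v w k)" if "k \<le> n" for k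
  proof (cases "k = n")
    case True
    then show ?thesis
      using w by (simp add: extend_frame_def orthogonal_def inner_diff_left unit_normal_def norm_eq_1)
  next
    case False
    then have "w \<bullet> v k = 0" "w' \<bullet> v k = 0"
      using that w w' by (auto simp: unit_normal_def inner_commute)
    then show ?thesis
      using False by (simp add: extend_frame_def orthogonal_def inner_diff_left)
  qed
  then have "orthogonal (w' - (w' \<bullet> w) *\<^sub>R w) b" if "b \<in> ?B" for b
    using that by auto
  from orthogonal_to_span[OF in_span this] have w'_eq: "w' = (w' \<bullet> w) *\<^sub>R w"
    by (simp add: orthogonal_def)
  then have "norm w' = \<bar>w' \<bullet> w\<bar> * norm w"
    by (metis norm_scaleR)
  then have "\<bar>w' \<bullet> w\<bar> = 1"
    using w w' by (simp add: unit_normal_def)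
  then show ?thesis
    using w'_eq by (cases "w' \<bullet> w \<ge> 0") auto
qed

lemma unit_normal_exists: "\<exists>w. unit_normal n v w"
proof -
  let ?S = "v ` {..<n}"
  have "dim ?S \<le> card ?S"
    by (rule dim_le_card) (auto intro: span_base)
  also have "\<dots> \<le> n"
    using card_image_le[of "{..<n}" v] by simp
  finally have "dim ?S < DIM(real^'n)"
    using card by simp
  then obtain x where x: "x \<noteq> 0" "\<And>y. y \<in> span ?S \<Longrightarrow> orthogonal x y"
    using orthogonal_to_subspace_exists by blast
  have "v i \<bullet> x = 0" if "i < n" for i
    using x(2)[OF span_base[OF imageI[of i "{..<n}" v]]] that by (simp add: orthogonal_def inner_commute)
  then have "unit_normal n v ((1 / norm x) *\<^sub>R x)"
    using x(1) by (simp add: unit_normal_def)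
  then show ?thesis ..
qed

lemma ex1_unit_normal_positive: "\<exists>!w. unit_normal n v w \<and> frame_det e (extend_frame n v w) = 1"
proof -
  obtain w where w: "unit_normal n v w"
    using unit_normal_exists by blast
  then have "unit_normal n v (- w)"
    by (simp add: unit_normal_def)
  then obtain w0 where w0: "unit_normal n v w0" "frame_det e (extend_frame n v w0) = 1"
    using w frame_det_extend_frame_cases[OF w] frame_det_extend_frame_uminus[of w] by fastforce
  show ?thesis
  proof (rule ex1I[of _ w0])
    fix y assume "unit_normal n v y \<and> frame_det e (extend_frame n v y) = 1"
    then show "y = w0"
      using unit_normal_unique[OF w0(1)] w0(2) frame_det_extend_frame_uminus[of w0] by force
  qed (use w0 in simp)
qed


lemma inner_residual_eq_0:
  assumes "i < n"
  shows "v i \<bullet> (d - (\<Sum>j<n. (d \<bullet> v j) *\<^sub>R v j)) = 0"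
proof -
  have "v i \<bullet> (\<Sum>j<n. (d \<bullet> v j) *\<^sub>R v j) = (\<Sum>j<n. (d \<bullet> v j) * (if i = j then 1 else 0))"
    unfolding inner_sum_right using assms by (intro sum.cong) (simp_all add: orthonormal)
  also have "\<dots> = d \<bullet> v i"
    using assms by (simp add: if_distrib cong: if_cong)
  finally show ?thesis
    by (simp add: inner_diff_right inner_commute)
qed

lemma unit_normal_normalize_residual:
  assumes "d - (\<Sum>j<n. (d \<bullet> v j) *\<^sub>R v j) \<noteq> 0"
  shows "unit_normal n v ((1 / norm (d - (\<Sum>j<n. (d \<bullet> v j) *\<^sub>R v j))) *\<^sub>R (d - (\<Sum>j<n. (d \<bullet> v j) *\<^sub>R v j)))"
  using assms inner_residual_eq_0 by (simp add: unit_normal_def)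
end

section \<open>The dual curve\<close>

lemma isCont_eventually_mem:
  assumes "isCont f x" "open S" "f x \<in> S"
  shows "eventually (\<lambda>y. f y \<in> S) (nhds x)"
proof -
  have "eventually (\<lambda>y. f y \<in> S) (at x)"
    using topological_tendstoD[OF isContD[OF assms(1)] assms(2,3)] .
  then show ?thesis
    using assms(3) by (auto simp: eventually_at_filter elim: eventually_mono)
qed

lemma (in spherical_frame) isCont_frame_u: "i < n \<Longrightarrow> s \<in> I \<Longrightarrow> isCont (frame_u \<gamma> i) s"
  using smooth_on_imp_continuous_on[OF smooth_on_frame_u] open_I
  by (simp add: continuous_on_eq_continuous_at)

locale spherical_dual_frame = spherical_frame \<gamma> I n for \<gamma> :: "real \<Rightarrow> real^'n::finite" and I n +
  fixes e :: "nat \<Rightarrow> 'n"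
  assumes card: "CARD('n) = n + 1"
    and bij: "bij_betw e {0..n} (UNIV :: 'n set)"
begin

lemma orthonormal_family_frame_u: "s \<in> I \<Longrightarrow> orthonormal_family e n (\<lambda>i. frame_u \<gamma> i s)"
  using card bij frame_u_orthonormal by (simp add: orthonormal_family_def)

lemma dual_curve_eq_The:
  "dual_curve e n \<gamma> s = (THE w. unit_normal n (\<lambda>i. frame_u \<gamma> i s) w \<and>
     frame_det e (extend_frame n (\<lambda>i. frame_u \<gamma> i s) w) = 1)"
  by (simp add: dual_curve_def unit_normal_def extend_frame_def)

lemma dual_curve_unit_normal:
  assumes "s \<in> I"
  shows "unit_normal n (\<lambda>i. frame_u \<gamma> i s) (dual_curve e n \<gamma> s)"
    and "frame_det e (extend_frame n (\<lambda>i. frame_u \<gamma> i s) (dual_curve e n \<gamma> s)) = 1"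
  using theI'[OF orthonormal_family.ex1_unit_normal_positive[OF orthonormal_family_frame_u[OF assms]]]
  by (simp_all add: dual_curve_eq_The)

lemma dual_curve_eqI:
  assumes "s \<in> I" "unit_normal n (\<lambda>i. frame_u \<gamma> i s) w"
    and "frame_det e (extend_frame n (\<lambda>i. frame_u \<gamma> i s) w) > 0"
  shows "dual_curve e n \<gamma> s = w"
proof -
  interpret orthonormal_family e n "\<lambda>i. frame_u \<gamma> i s"
    by (rule orthonormal_family_frame_u[OF assms(1)])
  have "frame_det e (extend_frame n (\<lambda>i. frame_u \<gamma> i s) w) = 1"
    using frame_det_extend_frame_cases[OF assms(2)] assms(3) by linarith
  then show ?thesis
    using ex1_unit_normal_positive dual_curve_unit_normal[OF assms(1)] assms(2) by blast
qed

lemma norm_dual_curve: "s \<in> I \<Longrightarrow> norm (dual_curve e n \<gamma> s) = 1"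
  using dual_curve_unit_normal by (simp add: unit_normal_def)

text \<open>
  Near \<open>s\<^sub>0\<close>, \<open>u\<^sub>n(s)\<close> is the normalised component of \<open>u\<^sub>n(s\<^sub>0)\<close> orthogonal to
  \<open>u\<^sub>0(s), \<dots>, u\<^sub>n\<^sub>-\<^sub>1(s)\<close>: that vector is a unit normal depending continuously on \<open>s\<close>, and its
  orientation determinant, which can only be \<open>\<plusminus>1\<close>, stays positive by continuity.
\<close>

lemma isCont_dual_curve:
  assumes s0: "s0 \<in> I"
  shows "isCont (dual_curve e n \<gamma>) s0"
proof -
  define d0 where "d0 = dual_curve e n \<gamma> s0"
  define q where "q s = d0 - (\<Sum>i<n. (d0 \<bullet> frame_u \<gamma> i s) *\<^sub>R frame_u \<gamma> i s)" for s
  define g where "g s = (1 / norm (q s)) *\<^sub>R q s" for s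
  define D where "D s = frame_det e (extend_frame n (\<lambda>i. frame_u \<gamma> i s) (g s))" for s
  have "d0 \<bullet> frame_u \<gamma> i s0 = 0" if "i < n" for i
    using dual_curve_unit_normal(1)[OF s0] that by (simp add: unit_normal_def d0_def inner_commute)
  then have q_s0: "q s0 = d0"
    by (simp add: q_def)
  have norm_d0: "norm d0 = 1"
    using norm_dual_curve[OF s0] by (simp add: d0_def)
  have q_cont: "isCont q s0"
    unfolding q_def by (intro continuous_intros isCont_frame_u s0) auto
  have g_cont: "isCont g s0"
    unfolding g_def using q_s0 norm_d0 by (intro continuous_intros q_cont) auto
  have g_s0: "g s0 = d0"
    by (simp add: g_def q_s0 norm_d0)
  have D_cont: "isCont D s0"
    unfolding D_def
  proof (rule continuous_frame_det[OF card bij])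
    fix k assume "k \<le> n"
    then show "isCont (\<lambda>s. extend_frame n (\<lambda>i. frame_u \<gamma> i s) (g s) k) s0"
      by (cases "k = n") (simp_all add: extend_frame_def g_cont isCont_frame_u s0)
  qed
  have "eventually (\<lambda>s. q s \<in> - {0}) (nhds s0)"
    using norm_d0 by (intro isCont_eventually_mem[OF q_cont]) (auto simp: q_s0 open_Compl)
  moreover have "eventually (\<lambda>s. D s \<in> {0<..}) (nhds s0)"
    using dual_curve_unit_normal(2)[OF s0]
    by (intro isCont_eventually_mem[OF D_cont]) (simp_all add: D_def g_s0 d0_def)
  ultimately have "eventually (\<lambda>s. s \<in> I \<and> q s \<in> - {0} \<and> D s \<in> {0<..}) (nhds s0)"
    using eventually_nhds_in_open[OF open_I s0] by (intro eventually_conj)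
  then have "eventually (\<lambda>s. g s = dual_curve e n \<gamma> s) (nhds s0)"
  proof (rule eventually_mono)
    fix s assume s: "s \<in> I \<and> q s \<in> - {0} \<and> D s \<in> {0<..}"
    then have "unit_normal n (\<lambda>i. frame_u \<gamma> i s) (g s)"
      unfolding g_def q_def
      by (intro orthonormal_family.unit_normal_normalize_residual[OF orthonormal_family_frame_u])
        (auto simp: q_def)
    with s show "g s = dual_curve e n \<gamma> s"
      by (intro dual_curve_eqI[symmetric]) (auto simp: D_def)
  qed
  then show ?thesis
    using g_cont isCont_cong by blast
qed

end

section \<open>Germs of diffeomorphisms of the sphere\<close>

lemma L_equivalent_germsI:
  assumes "sphere_diffeo_germ \<psi> (f s0) (g s0)" "eventually (\<lambda>s. g s = \<psi> (f s)) (nhds s0)"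
  shows "L_equivalent_germs f g s0"
proof -
  obtain d where "d > 0" "\<And>s. dist s s0 < d \<Longrightarrow> g s = \<psi> (f s)"
    using assms(2) unfolding eventually_nhds_metric by blast
  then show ?thesis
    unfolding L_equivalent_germs_def using assms(1) by (intro exI conjI) (auto simp: dist_commute)
qed

lemma sphere_diffeo_germI:
  assumes "open U" "open V" "p \<in> U \<inter> sphere 0 1" "smooth_on U \<psi>" "smooth_on V \<phi>"
    and "\<And>x. x \<in> U \<inter> sphere 0 1 \<Longrightarrow> \<psi> x \<in> V \<inter> sphere 0 1"
    and "\<And>x. x \<in> U \<inter> sphere 0 1 \<Longrightarrow> \<phi> (\<psi> x) = x"
    and "\<And>y. y \<in> V \<inter> sphere 0 1 \<Longrightarrow> \<phi> y \<in> U \<inter> sphere 0 1"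
    and "\<And>y. y \<in> V \<inter> sphere 0 1 \<Longrightarrow> \<psi> (\<phi> y) = y"
  shows "sphere_diffeo_germ \<psi> p (\<psi> p)"
  unfolding sphere_diffeo_germ_def
proof (rule exI[of _ U], rule exI[of _ V], rule exI[of _ \<phi>], intro conjI)
  show "\<psi> ` (U \<inter> sphere 0 1) \<subseteq> V \<inter> sphere 0 1" "\<phi> ` (V \<inter> sphere 0 1) \<subseteq> U \<inter> sphere 0 1"
    using assms(6,8) by blast+
qed (use assms(1-5,6,7,9) in auto)

lemma normalize_add_left_inverse:
  fixes Q x :: "'a::real_inner"
  assumes Q: "norm Q = 1" and \<sigma>: "\<sigma> = 1 \<or> \<sigma> = -1" and x: "norm x = 1" "Q \<bullet> x > -1"
  defines "y \<equiv> (\<sigma> / norm (Q + x)) *\<^sub>R (Q + x)"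
  shows "norm y = 1 \<and> \<sigma> * (Q \<bullet> y) > 0 \<and> (2 * (Q \<bullet> y)) *\<^sub>R y - Q = x"
proof -
  define m where "m = norm (Q + x)"
  have QQ: "Q \<bullet> Q = 1" and \<sigma>\<sigma>: "\<sigma> * \<sigma> = 1"
    using Q \<sigma> by (auto simp: norm_eq_1)
  have "Q + x \<noteq> 0"
    using x(2) QQ by (auto simp: add_eq_0_iff)
  then have m_pos: "m > 0"
    by (simp add: m_def)
  have "m\<^sup>2 = 2 * (1 + Q \<bullet> x)"
    using x(1) QQ by (simp add: m_def power2_norm_eq_inner inner_add_left inner_add_right inner_commute norm_eq_1)
  then have Q_y: "Q \<bullet> y = \<sigma> * m / 2"
    using m_pos by (simp add: y_def m_def[symmetric] inner_add_right QQ power2_eq_square field_simps)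
  have "norm y = 1"
    using \<sigma> m_pos by (auto simp: y_def m_def[symmetric])
  moreover have "\<sigma> * (Q \<bullet> y) > 0"
    using m_pos \<sigma>\<sigma> by (simp add: Q_y mult.assoc[symmetric])
  moreover have "(2 * (\<sigma> * m / 2)) * (\<sigma> / m) = \<sigma> * \<sigma>"
    using m_pos by simp
  then have "(2 * (Q \<bullet> y)) *\<^sub>R y = Q + x"
    unfolding Q_y using \<sigma>\<sigma> by (simp add: y_def m_def[symmetric])
  ultimately show ?thesis
    by simp
qed

lemma normalize_add_right_inverse:
  fixes Q y :: "'a::real_inner"
  assumes Q: "norm Q = 1" and \<sigma>: "\<sigma> = 1 \<or> \<sigma> = -1" and y: "norm y = 1" "\<sigma> * (Q \<bullet> y) > 0"
  defines "x \<equiv> (2 * (Q \<bullet> y)) *\<^sub>R y - Q"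
  shows "norm x = 1 \<and> Q \<bullet> x > -1 \<and> (\<sigma> / norm (Q + x)) *\<^sub>R (Q + x) = y"
proof -
  define a where "a = Q \<bullet> y"
  have QQ: "Q \<bullet> Q = 1" and yy: "y \<bullet> y = 1"
    using Q y(1) by (simp_all add: norm_eq_1)
  have "a * a > 0"
    using \<sigma> y(2) by (auto simp: a_def zero_less_mult_iff)
  moreover have "x \<bullet> x = 1"
    by (simp add: x_def algebra_simps inner_commute yy QQ a_def[symmetric])
  moreover have "Q \<bullet> x = 2 * a * a - 1"
    by (simp add: x_def inner_diff_right QQ a_def)
  moreover have "(\<sigma> / norm (Q + x)) *\<^sub>R (Q + x) = y"
  proof -
    have "Q + x = (2 * a) *\<^sub>R y" and "norm ((2 * a) *\<^sub>R y) = 2 * \<bar>a\<bar>"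
      using y(1) by (simp_all add: x_def a_def)
    moreover have "\<sigma> / (2 * \<bar>a\<bar>) * (2 * a) = 1"
      using \<sigma> y(2) by (auto simp: abs_if a_def)
    ultimately show ?thesis
      by (simp only: scaleR_scaleR scaleR_one)
  qed
  ultimately show ?thesis
    by (simp add: norm_eq_1)
qed

lemma sphere_diffeo_germ_normalize_add:
  fixes Q p :: "real^'n::finite"
  assumes Q: "norm Q = 1" and \<sigma>: "\<sigma> = 1 \<or> \<sigma> = -1"
    and p: "norm p = 1" "Q \<bullet> p > -1"
  shows "sphere_diffeo_germ (\<lambda>x. (\<sigma> / norm (Q + x)) *\<^sub>R (Q + x)) p ((\<sigma> / norm (Q + p)) *\<^sub>R (Q + p))"
proof -
  define \<psi> where "\<psi> x = (\<sigma> / norm (Q + x)) *\<^sub>R (Q + x)" for x :: "real^'n"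
  define \<phi> where "\<phi> y = (2 * (Q \<bullet> y)) *\<^sub>R y - Q" for y :: "real^'n"
  define U where "U = {x. Q \<bullet> x > -1}"
  define V where "V = {y. (\<sigma> *\<^sub>R Q) \<bullet> y > 0}"
  have open_U: "open U" and open_V: "open V"
    unfolding U_def V_def by (rule open_halfspace_gt)+
  have nonzero: "Q + x \<noteq> 0" if "x \<in> U" for x
    using that Q by (auto simp: U_def add_eq_0_iff norm_eq_1)
  have smooth_sum: "smooth_on U (\<lambda>x. Q + x)"
    by (intro smooth_on_add smooth_on_const smooth_on_ident open_U)
  then have "smooth_on U (\<lambda>x. norm (Q + x))"
    using nonzero by (rule smooth_on_norm[OF open_U])
  then have "smooth_on U (\<lambda>x. \<sigma> / norm (Q + x))"
    using nonzero by (intro smooth_on_divide smooth_on_const open_U) auto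
  then have smooth_\<psi>: "smooth_on U \<psi>"
    unfolding \<psi>_def[abs_def] using smooth_sum by (rule smooth_on_scaleR[OF open_U])
  have "smooth_on V (\<lambda>y. Q \<bullet> y)"
    by (rule smooth_on_inner[OF open_V smooth_on_const[OF open_V] smooth_on_ident[OF open_V]])
  then have "smooth_on V (\<lambda>y. 2 * (Q \<bullet> y))"
    by (rule smooth_on_mult[OF open_V smooth_on_const[OF open_V]])
  then have "smooth_on V (\<lambda>y. (2 * (Q \<bullet> y)) *\<^sub>R y)"
    by (rule smooth_on_scaleR[OF open_V _ smooth_on_ident[OF open_V]])
  then have smooth_\<phi>: "smooth_on V \<phi>"
    unfolding \<phi>_def[abs_def] by (rule smooth_on_diff[OF open_V _ smooth_on_const[OF open_V]])
  have "sphere_diffeo_germ \<psi> p (\<psi> p)"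
  proof (rule sphere_diffeo_germI[OF open_U open_V _ smooth_\<psi> smooth_\<phi>])
    show "p \<in> U \<inter> sphere 0 1"
      using p by (simp add: U_def)
    fix x assume "x \<in> U \<inter> sphere 0 1"
    then show "\<psi> x \<in> V \<inter> sphere 0 1" and "\<phi> (\<psi> x) = x"
      using normalize_add_left_inverse[OF Q \<sigma>, of x] by (simp_all add: U_def V_def \<psi>_def \<phi>_def)
  next
    fix y assume "y \<in> V \<inter> sphere 0 1"
    then show "\<phi> y \<in> U \<inter> sphere 0 1" and "\<psi> (\<phi> y) = y"
      using normalize_add_right_inverse[OF Q \<sigma>, of y] by (simp_all add: U_def V_def \<psi>_def \<phi>_def)
  qed
  then show ?thesis
    by (simp add: \<psi>_def[abs_def])
qed

lemma norm_reflect: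
  fixes P u :: "'a::real_inner"
  assumes "norm P = 1" "norm u = 1"
  shows "norm (P - (2 * (P \<bullet> u)) *\<^sub>R u) = 1"
  using assms by (simp add: norm_eq_1 algebra_simps inner_commute)

lemma normalize_add_reflect:
  fixes P u :: "'a::real_inner"
  assumes "norm P = 1" "norm u = 1"
  shows "(1 / norm (P + (P - (2 * (P \<bullet> u)) *\<^sub>R u))) *\<^sub>R (P + (P - (2 * (P \<bullet> u)) *\<^sub>R u)) =
    (1 / sqrt (1 - (P \<bullet> u)\<^sup>2)) *\<^sub>R (P - (P \<bullet> u) *\<^sub>R u)"
proof -
  have "norm (P - (P \<bullet> u) *\<^sub>R u) = sqrt (1 - (P \<bullet> u)\<^sup>2)"
    using assms
    by (simp add: norm_eq_sqrt_inner norm_eq_1 algebra_simps inner_commute power2_eq_square)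
  moreover have "P + (P - (2 * (P \<bullet> u)) *\<^sub>R u) = 2 *\<^sub>R (P - (P \<bullet> u) *\<^sub>R u)"
    by (simp add: algebra_simps scaleR_2)
  ultimately show ?thesis
    by simp
qed

lemma normalize_reflect_minus:
  fixes P u :: "'a::real_inner"
  assumes "norm u = 1" "\<tau> = 1 \<or> \<tau> = -1" "\<tau> * (P \<bullet> u) > 0"
  shows "(- \<tau> / norm (- P + (P - (2 * (P \<bullet> u)) *\<^sub>R u))) *\<^sub>R (- P + (P - (2 * (P \<bullet> u)) *\<^sub>R u)) = u"
proof -
  have "- P + (P - (2 * (P \<bullet> u)) *\<^sub>R u) = (- 2 * (P \<bullet> u)) *\<^sub>R u"
    by simp
  moreover have "norm ((- 2 * (P \<bullet> u)) *\<^sub>R u) = 2 * \<bar>P \<bullet> u\<bar>"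
    using assms(1) by (simp add: abs_mult)
  moreover have "- \<tau> / (2 * \<bar>P \<bullet> u\<bar>) * (- 2 * (P \<bullet> u)) = 1"
    using assms(2,3) by (auto simp: abs_if)
  ultimately show ?thesis
    by (simp only: scaleR_scaleR scaleR_one)
qed

lemma unit_inner_eq_pm1_imp:
  fixes P u :: "'a::real_inner"
  assumes "norm P = 1" "norm u = 1" "\<bar>P \<bullet> u\<bar> = 1"
  shows "P = u \<or> P = - u"
proof -
  have "(P \<bullet> u) * (P \<bullet> u) = 1"
    using assms(3) abs_mult_self_eq[of "P \<bullet> u"] by simp
  then have "(P - (P \<bullet> u) *\<^sub>R u) \<bullet> (P - (P \<bullet> u) *\<^sub>R u) = 0"
    using assms(1,2) by (simp add: norm_eq_1 algebra_simps inner_commute)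
  then have "P = (P \<bullet> u) *\<^sub>R u"
    by simp
  moreover have "P \<bullet> u = 1 \<or> P \<bullet> u = -1"
    using assms(3) by linarith
  ultimately show ?thesis
    by auto
qed

section \<open>Orthotomic, pedal and dual curves\<close>

lemma orthotomic_eq:
  "orthotomic e n \<gamma> P s = P - (2 * (P \<bullet> dual_curve e n \<gamma> s)) *\<^sub>R dual_curve e n \<gamma> s"
  by (simp add: orthotomic_def Let_def)

lemma pedal_eq:
  "pedal e n \<gamma> P s = (1 / sqrt (1 - (P \<bullet> dual_curve e n \<gamma> s)\<^sup>2)) *\<^sub>R
     (P - (P \<bullet> dual_curve e n \<gamma> s) *\<^sub>R dual_curve e n \<gamma> s)"
  by (simp add: pedal_def Let_def)

lemma inner_orthotomic:
  "norm P = 1 \<Longrightarrow> P \<bullet> orthotomic e n \<gamma> P s = 1 - 2 * (P \<bullet> dual_curve e n \<gamma> s)\<^sup>2"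
  by (simp add: orthotomic_eq inner_diff_right norm_eq_1 power2_eq_square)

context spherical_dual_frame
begin

lemma norm_orthotomic: "norm P = 1 \<Longrightarrow> s \<in> I \<Longrightarrow> norm (orthotomic e n \<gamma> P s) = 1"
  unfolding orthotomic_eq by (intro norm_reflect norm_dual_curve)

lemma isCont_inner_dual_curve: "s0 \<in> I \<Longrightarrow> isCont (\<lambda>s. P \<bullet> dual_curve e n \<gamma> s) s0"
  using isCont_dual_curve by (intro continuous_intros)

lemma eventually_pedal_defined:
  assumes "norm P = 1" "s0 \<in> I" "P \<noteq> dual_curve e n \<gamma> s0" "P \<noteq> - dual_curve e n \<gamma> s0"
  shows "eventually (\<lambda>s. s \<in> I \<and> P \<bullet> dual_curve e n \<gamma> s \<in> {-1<..<1}) (nhds s0)"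
proof -
  have "\<bar>P \<bullet> dual_curve e n \<gamma> s0\<bar> \<le> 1"
    using Cauchy_Schwarz_ineq2[of P "dual_curve e n \<gamma> s0"] assms(1) norm_dual_curve[OF assms(2)] by simp
  moreover have "\<bar>P \<bullet> dual_curve e n \<gamma> s0\<bar> \<noteq> 1"
    using unit_inner_eq_pm1_imp[OF assms(1) norm_dual_curve[OF assms(2)]] assms(3,4) by blast
  ultimately have "P \<bullet> dual_curve e n \<gamma> s0 \<in> {-1<..<1}"
    by auto
  then show ?thesis
    using eventually_nhds_in_open[OF open_I assms(2)]
    by (intro eventually_conj isCont_eventually_mem[OF isCont_inner_dual_curve[OF assms(2)]]) auto
qed

lemma orthotomic_L_equivalent_pedal:
  assumes P: "norm P = 1" and s0: "s0 \<in> I" and "P \<bullet> dual_curve e n \<gamma> s0 \<in> {-1<..<1}"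
  shows "L_equivalent_germs (orthotomic e n \<gamma> P) (pedal e n \<gamma> P) s0"
proof (rule L_equivalent_germsI)
  let ?\<psi> = "\<lambda>x. (1 / norm (P + x)) *\<^sub>R (P + x)"
  have "P \<bullet> orthotomic e n \<gamma> P s0 > -1"
    using assms(3) by (simp add: inner_orthotomic[OF P] abs_square_less_1 abs_less_iff)
  then have "sphere_diffeo_germ ?\<psi> (orthotomic e n \<gamma> P s0) (?\<psi> (orthotomic e n \<gamma> P s0))"
    using sphere_diffeo_germ_normalize_add[OF P _ norm_orthotomic[OF P s0], of 1] by simp
  moreover have pedal: "pedal e n \<gamma> P s = ?\<psi> (orthotomic e n \<gamma> P s)" if "s \<in> I" for s
    unfolding orthotomic_eq pedal_eq by (rule normalize_add_reflect[OF P norm_dual_curve[OF that], symmetric])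
  ultimately show "sphere_diffeo_germ ?\<psi> (orthotomic e n \<gamma> P s0) (pedal e n \<gamma> P s0)"
    using s0 by simp
  show "eventually (\<lambda>s. pedal e n \<gamma> P s = ?\<psi> (orthotomic e n \<gamma> P s)) (nhds s0)"
    using eventually_nhds_in_open[OF open_I s0] by (rule eventually_mono) (rule pedal)
qed

lemma orthotomic_L_equivalent_dual_curve:
  assumes P: "norm P = 1" and s0: "s0 \<in> I" and "P = dual_curve e n \<gamma> s0 \<or> P = - dual_curve e n \<gamma> s0"
  shows "L_equivalent_germs (orthotomic e n \<gamma> P) (dual_curve e n \<gamma>) s0"
proof -
  define \<tau> where "\<tau> = P \<bullet> dual_curve e n \<gamma> s0"
  \<comment> \<open>\<open>ort(s) - P = -2 (P \<bullet> u\<^sub>n(s)) u\<^sub>n(s)\<close>, so normalising recovers \<open>u\<^sub>n(s)\<close> while the sign of \<open>P \<bullet> u\<^sub>n\<close> is \<open>\<tau>\<close>\<close>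
  define \<psi> where "\<psi> x = (- \<tau> / norm (- P + x)) *\<^sub>R (- P + x)" for x
  have \<tau>: "\<tau> = 1 \<or> \<tau> = -1"
    using assms(3) P by (auto simp: \<tau>_def norm_eq_1)
  have dual: "dual_curve e n \<gamma> s = \<psi> (orthotomic e n \<gamma> P s)"
    if "s \<in> I" "\<tau> * (P \<bullet> dual_curve e n \<gamma> s) > 0" for s
    unfolding orthotomic_eq \<psi>_def using \<tau> that by (intro normalize_reflect_minus[symmetric] norm_dual_curve)
  have "- P \<bullet> orthotomic e n \<gamma> P s0 > -1"
    using \<tau> by (auto simp: inner_orthotomic[OF P] \<tau>_def[symmetric])
  then have "sphere_diffeo_germ \<psi> (orthotomic e n \<gamma> P s0) (\<psi> (orthotomic e n \<gamma> P s0))"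
    unfolding \<psi>_def[abs_def] using \<tau> P by (intro sphere_diffeo_germ_normalize_add norm_orthotomic s0) auto
  moreover have "\<tau> * (P \<bullet> dual_curve e n \<gamma> s0) > 0"
    using \<tau> by (auto simp: \<tau>_def[symmetric])
  ultimately have "sphere_diffeo_germ \<psi> (orthotomic e n \<gamma> P s0) (dual_curve e n \<gamma> s0)"
    by (simp only: dual[OF s0, symmetric])
  moreover have "isCont (\<lambda>s. \<tau> * (P \<bullet> dual_curve e n \<gamma> s)) s0"
    using isCont_inner_dual_curve[OF s0] by (intro continuous_mult continuous_const)
  then have "eventually (\<lambda>s. \<tau> * (P \<bullet> dual_curve e n \<gamma> s) \<in> {0<..}) (nhds s0)"
    using \<tau> by (intro isCont_eventually_mem) (auto simp: \<tau>_def[symmetric])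
  with eventually_nhds_in_open[OF open_I s0]
  have "eventually (\<lambda>s. dual_curve e n \<gamma> s = \<psi> (orthotomic e n \<gamma> P s)) (nhds s0)"
    by eventually_elim (rule dual; simp)
  ultimately show ?thesis
    by (rule L_equivalent_germsI)
qed

end

theorem theorem1:
  fixes n :: nat and I :: "real set" and \<gamma> :: "real \<Rightarrow> real^'n::finite"
    and e :: "nat \<Rightarrow> 'n" and P :: "real^'n" and s0 :: real
  assumes "n \<ge> 2"
    and "CARD('n) = n + 1"
    and "bij_betw e {0..n} (UNIV :: 'n set)"
    and "open I" and "is_interval I"
    and "spherical_unit_speed_curve n I \<gamma>"
    and "norm P = 1"
    and "s0 \<in> I"
  shows "(P \<noteq> dual_curve e n \<gamma> s0 \<and> P \<noteq> - dual_curve e n \<gamma> s0 \<longrightarrow>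
            (\<exists>\<epsilon>>0. ball s0 \<epsilon> \<subseteq> I \<and>
               (\<forall>s\<in>ball s0 \<epsilon>. P \<bullet> dual_curve e n \<gamma> s \<noteq> 1 \<and> P \<bullet> dual_curve e n \<gamma> s \<noteq> -1)) \<and>
            L_equivalent_germs (orthotomic e n \<gamma> P) (pedal e n \<gamma> P) s0)
       \<and> ((P = dual_curve e n \<gamma> s0 \<or> P = - dual_curve e n \<gamma> s0) \<longrightarrow>
            L_equivalent_germs (orthotomic e n \<gamma> P) (dual_curve e n \<gamma>) s0)"
proof -
  \<comment> \<open>only \<open>n \<ge> 1\<close> is needed, and \<open>is_interval I\<close> is not: all the arguments are local\<close>
  interpret spherical_dual_frame \<gamma> I n e
    using assms by unfold_locales (auto simp: spherical_unit_speed_curve_def)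
  have "(\<exists>\<epsilon>>0. ball s0 \<epsilon> \<subseteq> I \<and>
      (\<forall>s\<in>ball s0 \<epsilon>. P \<bullet> dual_curve e n \<gamma> s \<noteq> 1 \<and> P \<bullet> dual_curve e n \<gamma> s \<noteq> -1)) \<and>
      L_equivalent_germs (orthotomic e n \<gamma> P) (pedal e n \<gamma> P) s0"
    if ne: "P \<noteq> dual_curve e n \<gamma> s0" "P \<noteq> - dual_curve e n \<gamma> s0"
  proof -
    obtain \<epsilon> where "\<epsilon> > 0" and \<epsilon>: "\<And>s. dist s s0 < \<epsilon> \<Longrightarrow> s \<in> I \<and> P \<bullet> dual_curve e n \<gamma> s \<in> {-1<..<1}"
      using eventually_pedal_defined[OF \<open>norm P = 1\<close> \<open>s0 \<in> I\<close> ne]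
      unfolding eventually_nhds_metric by blast
    then show ?thesis
      using orthotomic_L_equivalent_pedal[OF \<open>norm P = 1\<close> \<open>s0 \<in> I\<close>] \<epsilon>[of s0]
      by (intro conjI exI[of _ \<epsilon>] subsetI ballI) (fastforce simp: dist_commute)+
  qed
  then show ?thesis
    using orthotomic_L_equivalent_dual_curve[OF \<open>norm P = 1\<close> \<open>s0 \<in> I\<close>] by blast
qed

end
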